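(* For every $v\in\{0,\dots,n-1\}$, every $\pi\in\Pi$ and every $f\in\mathcal F$, $$\sum_{e\in\mathcal E_v^+}\sigma_e H_e(f,\pi)\le -V^+_v(f,\pi)+V^-_v(f,\pi).$$
   Context: $\mathcal G=(\mathcal V,\mathcal E)$ is a finite directed graph with $\mathcal V=\{0,1,\dots,n\}$, containing no directed cycle, in which node $0$ is the unique node with no incoming link, node $n$ is the unique node with no outgoing link, there is a directed path from every node to $n$, and every link $(u,v)\in\mathcal E$ satisfies $u<v$. For $v\in\mathcal V$, $\mathcal E_v^-$ and $\mathcal E_v^+$ are the sets of links entering and leaving $v$. Each link $e$ has a capacity $C_e\in(0,+\infty]$; $\mathcal F_v:=\prod_{e\in\mathcal E_v^+}[0,C_e)$, $\mathcal F:=\prod_{e\in\mathcal E}[0,C_e)$. $\mathcal P$ is the set of directed paths from $0$ to $n$, $A$ the link-path incidence matrix ($A_{ep}=1$ iff $e\in p$), $\mathcal S(\cdot)$ denotes a probability simplex, $\Pi:=\{\pi\in\mathcal S(\mathcal P):(A\pi)_e<C_e\ \forall e\}$, and $f^\pi:=A\pi$. For each $v\in\{0,\dots,n-1\}$ a continuously differentiable $G^v:\mathcal F_v\times\Pi\to\mathcal S(\mathcal E_v^+)$ is given such that (consistency) $(\sum_{j\in\mathcal E_v^+}f^\pi_j)\,G^v_e(f^\pi_{\mathcal E_v^+},\pi)=f^\pi_e$ for all $\pi\in\Pi$, $e\in\mathcal E_v^+$, where $f^\pi_{\mathcal E_v^+}=(f^\pi_j)_{j\in\mathcal E_v^+}$;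 and (cooperativity) $\partial G^v_j(f_{\mathcal E_v^+},\pi)/\partial f_e\ge0$ for all $\pi\in\Pi$, $f_{\mathcal E_v^+}\in\mathcal F_v$, $j\neq e\in\mathcal E_v^+$. For $f\in\mathcal F$, $\pi\in\Pi$, $e\in\mathcal E_v^+$: $H_e(f,\pi):=G^v_e(f_{\mathcal E_v^+},\pi)-f_e$ if $v=0$, and $H_e(f,\pi):=(\sum_{j\in\mathcal E_v^-}f_j)G^v_e(f_{\mathcal E_v^+},\pi)-f_e$ if $1\le v<n$. Notation: $\sigma_e:=\mathrm{sgn}(f_e-f^\pi_e)$ with $\mathrm{sgn}(0)=0$; $\lambda^\pi_v:=\sum_{e\in\mathcal E_v^+}f^\pi_e$; $\lambda^-_v:=\sum_{e\in\mathcal E_v^-}f_e$; $V^+_v(f,\pi):=\sum_{e\in\mathcal E_v^+}|f_e-f^\pi_e|$; $V^-_v(f,\pi):=|\lambda^\pi_v-\lambda^-_v|$ for $1\le v\le n$ and $V^-_0(f,\pi):=0$. *)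

theory Defs
  imports "HOL-Analysis.Analysis"
begin

type_synonym link = "nat \<times> nat"
type_synonym path = "link list"

definition out_links :: "link set \<Rightarrow> nat \<Rightarrow> link set" where
  "out_links E v = {e \<in> E. fst e = v}"

definition in_links :: "link set \<Rightarrow> nat \<Rightarrow> link set" where
  "in_links E v = {e \<in> E. snd e = v}"

definition is_path :: "link set \<Rightarrow> nat \<Rightarrow> path \<Rightarrow> bool" where
  "is_path E n p \<longleftrightarrow> p \<noteq> [] \<and> set p \<subseteq> E \<and> fst (hd p) = 0 \<and> snd (last p) = n \<and>
     (\<forall>i. Suc i < length p \<longrightarrow> snd (p ! i) = fst (p ! Suc i))"

definition paths :: "link set \<Rightarrow> nat \<Rightarrow> path set" where
  "paths E n = {p. is_path E n p}"

definition fpi :: "link set \<Rightarrow> nat \<Rightarrow> (path \<Rightarrow> real) \<Rightarrow> link \<Rightarrow> real" where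
  "fpi E n \<pi> e = (\<Sum>p\<in>{p \<in> paths E n. e \<in> set p}. \<pi> p)"

definition Pi_set :: "link set \<Rightarrow> nat \<Rightarrow> (link \<Rightarrow> ereal) \<Rightarrow> (path \<Rightarrow> real) set" where
  "Pi_set E n C = {\<pi>. (\<forall>p. p \<notin> paths E n \<longrightarrow> \<pi> p = 0) \<and> (\<forall>p\<in>paths E n. 0 \<le> \<pi> p) \<and>
      sum \<pi> (paths E n) = 1 \<and> (\<forall>e\<in>E. ereal (fpi E n \<pi> e) < C e)}"

definition flows_on :: "link set \<Rightarrow> (link \<Rightarrow> ereal) \<Rightarrow> (link \<Rightarrow> real) set" where
  "flows_on L C = {f. (\<forall>e. e \<notin> L \<longrightarrow> f e = 0) \<and> (\<forall>e\<in>L. 0 \<le> f e \<and> ereal (f e) < C e)}"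

definition F_set :: "link set \<Rightarrow> (link \<Rightarrow> ereal) \<Rightarrow> (link \<Rightarrow> real) set" where
  "F_set E C = {f. \<forall>e\<in>E. 0 \<le> f e \<and> ereal (f e) < C e}"

definition restr :: "link set \<Rightarrow> (link \<Rightarrow> real) \<Rightarrow> link \<Rightarrow> real" where
  "restr L f = (\<lambda>e. if e \<in> L then f e else 0)"

text \<open>Continuous differentiability of a real function of finitely many real coordinates
  (indexed by I) on a set S of points that vanish outside I.\<close>
definition C1_on :: "'i set \<Rightarrow> ('i \<Rightarrow> real) set \<Rightarrow> (('i \<Rightarrow> real) \<Rightarrow> real) \<Rightarrow> bool" where
  "C1_on I S g \<longleftrightarrow> (\<exists>D. (\<forall>i\<in>I. continuous_on S (D i)) \<and>
     (\<forall>x\<in>S. ((\<lambda>y. (g y - g x - (\<Sum>i\<in>I. D i x * (y i - x i))) / (\<Sum>i\<in>I. \<bar>y i - x i\<bar>))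
              \<longlongrightarrow> 0) (at x within S)))"

definition H :: "link set \<Rightarrow> (nat \<Rightarrow> (link \<Rightarrow> real) \<Rightarrow> (path \<Rightarrow> real) \<Rightarrow> link \<Rightarrow> real)
    \<Rightarrow> (link \<Rightarrow> real) \<Rightarrow> (path \<Rightarrow> real) \<Rightarrow> link \<Rightarrow> real" where
  "H E G f \<pi> e = (let v = fst e in
     if v = 0 then G v (restr (out_links E v) f) \<pi> e - f e
     else (\<Sum>j\<in>in_links E v. f j) * G v (restr (out_links E v) f) \<pi> e - f e)"

definition Vplus :: "link set \<Rightarrow> nat \<Rightarrow> nat \<Rightarrow> (link \<Rightarrow> real) \<Rightarrow> (path \<Rightarrow> real) \<Rightarrow> real" where
  "Vplus E n v f \<pi> = (\<Sum>e\<in>out_links E v. \<bar>f e - fpi E n \<pi> e\<bar>)"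

definition Vminus :: "link set \<Rightarrow> nat \<Rightarrow> nat \<Rightarrow> (link \<Rightarrow> real) \<Rightarrow> (path \<Rightarrow> real) \<Rightarrow> real" where
  "Vminus E n v f \<pi> = (if v = 0 then 0 else
     \<bar>(\<Sum>e\<in>out_links E v. fpi E n \<pi> e) - (\<Sum>e\<in>in_links E v. f e)\<bar>)"

end

theory Submission
  imports Defs
begin

(* Fix v < n and write O for the links leaving v, x for the restriction of f to O,
   y for the restriction of the equilibrium flow f^pi, p = G^v(x,pi), q = G^v(y,pi),
   lambda^pi = sum of f^pi over O and lambda^- the inflow into v (1 at the source).  Then
   H_e = lambda^- p_e - f_e and, by consistency, f^pi_e = lambda^pi q_e, so that
     sgn(f_e - f^pi_e) H_e = (lambda^- - lambda^pi) sgn(.) p_e + lambda^pi sgn(.) (p_e - q_e) - |f_e - f^pi_e|.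
   Summing, the first term is at most |lambda^pi - lambda^-| because p is a probability vector,
   and the middle term is nonpositive by a lattice argument for cooperative simplex-valued maps:
   comparing x and y with max(x,y) and min(x,y), cooperativity shows that the mass G puts on
   the links where x > y can only grow and the mass on the links where x < y only shrink. *)

section \<open>Partial derivatives of C1 maps\<close>

lemma fun_upd_tendsto:
  fixes z :: "'i \<Rightarrow> real"
  shows "((\<lambda>t. z(i:=t)) \<longlongrightarrow> z(i := t0)) (at t0 within T)"
proof -
  have "continuous_on UNIV (\<lambda>t::real. z(i:=t))"
  proof (rule continuous_on_coordinatewise_then_product)
    fix k show "continuous_on UNIV (\<lambda>t::real. (z(i:=t)) k)"
      by (cases "k = i") (auto intro: continuous_intros)
  qed
  then show ?thesis
    by (meson UNIV_I continuous_on_def tendsto_within_subset top_greatest)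
qed

text \<open>A C1 function has a partial derivative along every coordinate line that stays in its
  domain: restricting the first order approximation to the line gives the difference quotient.\<close>
lemma C1_on_partial_derivative:
  fixes g :: "('i \<Rightarrow> real) \<Rightarrow> real"
  assumes C1: "C1_on I S g" and fin: "finite I" and zS: "z \<in> S" and iI: "i \<in> I"
    and line: "\<forall>t\<in>T. z(i:=t) \<in> S"
  shows "\<exists>c. ((\<lambda>t. g (z(i:=t))) has_real_derivative c) (at (z i) within T)"
proof -
  obtain D where L: "((\<lambda>y. (g y - g z - (\<Sum>k\<in>I. D k z * (y k - z k))) / (\<Sum>k\<in>I. \<bar>y k - z k\<bar>))
              \<longlongrightarrow> 0) (at z within S)" using C1 zS unfolding C1_on_def by blast
  define c where "c = D i z"
  have filt: "filterlim (\<lambda>t. z(i:=t)) (at z within S) (at (z i) within T)"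
    unfolding filterlim_at
  proof
    show "\<forall>\<^sub>F t in at (z i) within T. z(i := t) \<in> S \<and> z(i := t) \<noteq> z"
      unfolding eventually_at_filter using line
      by (auto intro!: always_eventually dest: fun_cong[where x=i])
    show "((\<lambda>t. z(i:=t)) \<longlongrightarrow> z) (at (z i) within T)"
      using fun_upd_tendsto[of z i "z i" T] by simp
  qed
  have linear_part: "(\<Sum>k\<in>I. D k z * ((z(i:=t)) k - z k)) = c * (t - z i)" for t
  proof -
    have "(\<Sum>k\<in>I. D k z * ((z(i:=t)) k - z k)) = (\<Sum>k\<in>I. if k = i then c * (t - z i) else 0)"
      by (rule sum.cong) (auto simp: c_def)
    then show ?thesis using fin iI by simp
  qed
  have distance: "(\<Sum>k\<in>I. \<bar>(z(i:=t)) k - z k\<bar>) = \<bar>t - z i\<bar>" for t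
  proof -
    have "(\<Sum>k\<in>I. \<bar>(z(i:=t)) k - z k\<bar>) = (\<Sum>k\<in>I. if k = i then \<bar>t - z i\<bar> else 0)"
      by (rule sum.cong) auto
    then show ?thesis using fin iI by simp
  qed
  define q where "q t = (g (z(i:=t)) - g z - c * (t - z i)) / \<bar>t - z i\<bar>" for t
  have q0: "(q \<longlongrightarrow> 0) (at (z i) within T)"
    using filterlim_compose[OF L filt] unfolding q_def linear_part distance by simp
  have "((\<lambda>t. (g (z(i:=t)) - g (z(i:=z i))) / (t - z i) - c) \<longlongrightarrow> 0) (at (z i) within T)"
  proof (rule Lim_null_comparison)
    show "\<forall>\<^sub>F t in at (z i) within T. norm ((g (z(i:=t)) - g (z(i:=z i))) / (t - z i) - c) \<le> \<bar>q t\<bar>"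
      unfolding eventually_at_filter
    proof (intro always_eventually allI impI)
      fix t assume "t \<noteq> z i"
      then have "(g (z(i:=t)) - g (z(i:=z i))) / (t - z i) - c
          = (g (z(i:=t)) - g z - c * (t - z i)) / (t - z i)"
        by (simp add: field_simps)
      then show "norm ((g (z(i:=t)) - g (z(i:=z i))) / (t - z i) - c) \<le> \<bar>q t\<bar>"
        by (simp add: q_def abs_divide)
    qed
    show "((\<lambda>t. \<bar>q t\<bar>) \<longlongrightarrow> 0) (at (z i) within T)"
      using tendsto_rabs_zero[OF q0] .
  qed
  then have "((\<lambda>t. (g (z(i:=t)) - g (z(i:=z i))) / (t - z i)) \<longlongrightarrow> c) (at (z i) within T)"
    by (simp add: LIM_zero_iff)
  then show ?thesis by (auto simp: has_field_derivative_iff)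
qed

text \<open>The same for a map of two arguments (flows on links and path distributions), encoded
  on the disjoint union of the index sets as in the hypothesis on G: it has a partial
  derivative in every link coordinate along which the flow stays admissible.\<close>
lemma C1_on_link_partial_derivative:
  fixes h :: "('a \<Rightarrow> real) \<Rightarrow> ('b \<Rightarrow> real) \<Rightarrow> real"
  assumes C1: "C1_on (Inl ` L \<union> Inr ` P)
      {z. (\<lambda>l. z (Inl l)) \<in> A \<and> (\<lambda>p. z (Inr p)) \<in> B} (\<lambda>z. h (\<lambda>l. z (Inl l)) (\<lambda>p. z (Inr p)))"
    and fin: "finite L" "finite P" and eL: "e \<in> L"
    and line: "\<forall>s\<in>T. x(e:=s) \<in> A" and \<rho>B: "\<rho> \<in> B" and tT: "t \<in> T"
  shows "\<exists>c. ((\<lambda>s. h (x(e:=s)) \<rho>) has_real_derivative c) (at t within T)"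
proof -
  define S where "S = {z. (\<lambda>l. z (Inl l)) \<in> A \<and> (\<lambda>p. z (Inr p)) \<in> B}"
  define z where "z = case_sum (x(e:=t)) \<rho>"
  have components: "(\<lambda>l. (z(Inl e := s)) (Inl l)) = x(e:=s)" "(\<lambda>p. (z(Inl e := s)) (Inr p)) = \<rho>"
    for s by (auto simp: z_def)
  have on_line: "\<forall>s\<in>T. z(Inl e := s) \<in> S"
  proof
    fix s assume "s \<in> T"
    then show "z(Inl e := s) \<in> S"
      unfolding S_def mem_Collect_eq components using line \<rho>B by blast
  qed
  have "z(Inl e := t) = z" by (rule ext) (simp add: z_def split: sum.split)
  then have zS: "z \<in> S" using on_line tT by force
  have "Inl e \<in> Inl ` L \<union> Inr ` P" using eL by simp
  from C1_on_partial_derivative[OF C1[folded S_def] _ zS this on_line] fin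
  obtain c where "((\<lambda>s. h (\<lambda>l. (z(Inl e := s)) (Inl l)) (\<lambda>p. (z(Inl e := s)) (Inr p)))
      has_real_derivative c) (at (z (Inl e)) within T)" by auto
  then show ?thesis unfolding components by (auto simp: z_def)
qed

section \<open>From nonnegative partial derivatives to monotonicity\<close>

abbreviation cap_interval :: "ereal \<Rightarrow> real set" where
  "cap_interval c \<equiv> {t. 0 \<le> t \<and> ereal t < c}"

lemma nonneg_deriv_imp_mono_on_cap_interval:
  fixes \<phi> :: "real \<Rightarrow> real"
  assumes ex: "\<forall>t\<in>cap_interval c. \<exists>d. (\<phi> has_real_derivative d) (at t within cap_interval c)"
    and nn: "\<forall>t\<in>cap_interval c. \<forall>D. (\<phi> has_real_derivative D) (at t within cap_interval c) \<longrightarrow> 0 \<le> D"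
    and ab: "0 \<le> a" "a \<le> b" "ereal b < c"
  shows "\<phi> a \<le> \<phi> b"
proof -
  have inT: "s \<in> cap_interval c" if "0 \<le> s" "s \<le> b" for s
  proof -
    have "ereal s \<le> ereal b" using that by simp
    then have "ereal s < c" using ab(3) by (rule le_less_trans)
    then show ?thesis using that by simp
  qed
  have abT: "{a..b} \<subseteq> cap_interval c" using inT ab by auto
  show ?thesis
  proof (rule DERIV_nonneg_imp_increasing_open[OF ab(2)])
    fix t assume t: "a < t" "t < b"
    have "{0<..<b} \<subseteq> cap_interval c" using inT by auto
    moreover have "t \<in> {0<..<b}" using t ab by auto
    ultimately have "t \<in> interior (cap_interval c)"
      by (meson interior_maximal open_greaterThanLessThan subsetD)
    then have atT: "at t within cap_interval c = at t" by (rule at_within_interior)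
    have "t \<in> cap_interval c" using subsetD[OF abT] t by simp
    then obtain d where "(\<phi> has_real_derivative d) (at t within cap_interval c)" using ex by blast
    moreover from this have "0 \<le> d" using nn \<open>t \<in> cap_interval c\<close> by blast
    ultimately show "\<exists>y. (\<phi> has_real_derivative y) (at t) \<and> 0 \<le> y" using atT by auto
  next
    show "continuous_on {a..b} \<phi>"
      unfolding continuous_on_eq_continuous_within
    proof
      fix t assume "t \<in> {a..b}"
      then have "t \<in> cap_interval c" using subsetD[OF abT] by simp
      then obtain d where "(\<phi> has_real_derivative d) (at t within cap_interval c)" using ex by blast
      then have "continuous (at t within cap_interval c) \<phi>" by (rule DERIV_continuous)
      then show "continuous (at t within {a..b}) \<phi>" using abT continuous_within_subset by blast
    qed
  qed
qed

definition cooperative_on :: "link set \<Rightarrow> (link \<Rightarrow> ereal) \<Rightarrow> (link \<Rightarrow> (link \<Rightarrow> real) \<Rightarrow> real) \<Rightarrow> bool" where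
  "cooperative_on L C g \<longleftrightarrow> (\<forall>x\<in>flows_on L C. \<forall>e\<in>L. \<forall>j\<in>L.
      (\<exists>d. ((\<lambda>t. g j (x(e:=t))) has_real_derivative d) (at (x e) within cap_interval (C e))) \<and>
      (j \<noteq> e \<longrightarrow> (\<forall>D. ((\<lambda>t. g j (x(e:=t))) has_real_derivative D)
                         (at (x e) within cap_interval (C e)) \<longrightarrow> 0 \<le> D)))"

lemma cooperative_on_single_step:
  assumes coop: "cooperative_on L C g"
    and xF: "x \<in> flows_on L C" and x'F: "x' \<in> flows_on L C"
    and eL: "e \<in> L" and jL: "j \<in> L" and je: "j \<noteq> e" and le: "x e \<le> x' e"
  shows "g j x \<le> g j (x(e := x' e))"
proof -
  let ?\<phi> = "\<lambda>s. g j (x(e:=s))"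
  have line: "x(e:=t) \<in> flows_on L C" if "t \<in> cap_interval (C e)" for t
    using xF eL that unfolding flows_on_def by auto
  have at_line: "(\<exists>d. (?\<phi> has_real_derivative d) (at t within cap_interval (C e))) \<and>
      (\<forall>D. (?\<phi> has_real_derivative D) (at t within cap_interval (C e)) \<longrightarrow> 0 \<le> D)"
    if t: "t \<in> cap_interval (C e)" for t
    using cooperative_on_def[THEN iffD1, OF coop, rule_format, OF line[OF t] eL jL] je by simp
  have range: "0 \<le> x e" "ereal (x' e) < C e"
    using xF x'F eL unfolding flows_on_def by auto
  have "?\<phi> (x e) \<le> ?\<phi> (x' e)"
    by (rule nonneg_deriv_imp_mono_on_cap_interval[OF _ _ range(1) le range(2)])
      (use at_line in blast)+
  then show ?thesis by simp
qed

lemma cooperative_on_mono: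
  assumes coop: "cooperative_on L C g" and finL: "finite L"
  shows "x \<in> flows_on L C \<Longrightarrow> x' \<in> flows_on L C \<Longrightarrow> \<forall>l. x l \<le> x' l \<Longrightarrow> j \<in> L \<Longrightarrow> x j = x' j
    \<Longrightarrow> g j x \<le> g j x'"
proof (induction "card {e\<in>L. x e \<noteq> x' e}" arbitrary: x rule: less_induct)
  case less
  show ?case
  proof (cases "{e\<in>L. x e \<noteq> x' e} = {}")
    case True
    have "x l = x' l" for l
    proof (cases "l \<in> L")
      case True
      then show ?thesis using \<open>{e\<in>L. x e \<noteq> x' e} = {}\<close> by blast
    next
      case False
      then show ?thesis using less.prems(1,2) unfolding flows_on_def mem_Collect_eq by metis
    qed
    then have "x = x'" by (rule ext)
    then show ?thesis by simp
  next
    case False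
    then obtain e where e: "e \<in> L" "x e \<noteq> x' e" by blast
    define x'' where "x'' = x(e := x' e)"
    have x''F: "x'' \<in> flows_on L C" using less.prems e unfolding x''_def flows_on_def by auto
    have "{e\<in>L. x'' e \<noteq> x' e} \<subset> {e\<in>L. x e \<noteq> x' e}" using e unfolding x''_def by auto
    then have fewer: "card {e\<in>L. x'' e \<noteq> x' e} < card {e\<in>L. x e \<noteq> x' e}"
      using finL by (simp add: psubset_card_mono)
    have "j \<noteq> e" using e less.prems by auto
    then have "g j x \<le> g j x''"
      unfolding x''_def
      by (rule cooperative_on_single_step[OF coop less.prems(1,2) e(1) less.prems(4)])
        (use spec[OF less.prems(3), of e] in simp_all)
    also have "g j x'' \<le> g j x'"
      using less.hyps[OF fewer x''F less.prems(2)] less.prems e \<open>j \<noteq> e\<close> unfolding x''_def by auto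
    finally show ?thesis .
  qed
qed

section \<open>The lattice inequality for cooperative simplex-valued maps\<close>

lemma flows_on_max_min:
  assumes "x \<in> flows_on L C" and "y \<in> flows_on L C"
  shows "(\<lambda>l. max (x l) (y l)) \<in> flows_on L C" and "(\<lambda>l. min (x l) (y l)) \<in> flows_on L C"
  using assms unfolding flows_on_def by (auto simp: max_def min_def)

text \<open>With P the links where
  x > y and M those where x < y, compare x and y with max x y (which agrees with x on P and
  with y outside P) and with min x y: the mass on P grows from y to x, the mass on M shrinks.\<close>
lemma cooperative_sgn_sum_nonpos:
  assumes coop: "cooperative_on L C g" and finL: "finite L"
    and simplex: "\<forall>z\<in>flows_on L C. (\<Sum>e\<in>L. g e z) = 1"
    and xF: "x \<in> flows_on L C" and yF: "y \<in> flows_on L C"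
  shows "(\<Sum>e\<in>L. sgn (x e - y e) * (g e x - g e y)) \<le> 0"
proof -
  note mono = cooperative_on_mono[OF coop finL]
  define P where "P = {e\<in>L. x e > y e}"
  define M where "M = {e\<in>L. x e < y e}"
  define Z where "Z = {e\<in>L. x e = y e}"
  have fin: "finite P" "finite M" "finite Z" using finL unfolding P_def M_def Z_def by auto
  have split: "L = P \<union> M \<union> Z" unfolding P_def M_def Z_def by auto
  have disj: "P \<inter> M = {}" "P \<inter> Z = {}" "M \<inter> Z = {}" unfolding P_def M_def Z_def by auto
  have "(\<Sum>e\<in>L. sgn (x e - y e) * (g e x - g e y))
      = (\<Sum>e\<in>P. sgn (x e - y e) * (g e x - g e y)) + (\<Sum>e\<in>M. sgn (x e - y e) * (g e x - g e y))
        + (\<Sum>e\<in>Z. sgn (x e - y e) * (g e x - g e y))"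
    unfolding split using fin disj by (simp add: sum.union_disjoint Int_Un_distrib2)
  also have "\<dots> = ((\<Sum>e\<in>P. g e x) - (\<Sum>e\<in>P. g e y)) - ((\<Sum>e\<in>M. g e x) - (\<Sum>e\<in>M. g e y))"
    unfolding P_def M_def Z_def by (simp add: sum_subtractf)
  also have "\<dots> \<le> 0"
  proof -
    define zM where "zM = (\<lambda>l. max (x l) (y l))"
    define zm where "zm = (\<lambda>l. min (x l) (y l))"
    have zMF: "zM \<in> flows_on L C" and zmF: "zm \<in> flows_on L C"
      using flows_on_max_min[OF xF yF] unfolding zM_def zm_def by auto
    have PM: "P \<subseteq> L" "M \<subseteq> L" unfolding P_def M_def by auto
    have complement: "(\<Sum>e\<in>A. g e z) = 1 - (\<Sum>e\<in>L - A. g e z)"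
      if "z \<in> flows_on L C" "A \<subseteq> L" for z A
      using simplex that sum.subset_diff[OF that(2) finL, of "\<lambda>e. g e z"] by auto
    have "(\<Sum>e\<in>P. g e x) \<le> (\<Sum>e\<in>P. g e zM)"
      by (rule sum_mono, rule mono[OF xF zMF]) (auto simp: zM_def P_def)
    moreover have "(\<Sum>e\<in>L - P. g e y) \<le> (\<Sum>e\<in>L - P. g e zM)"
      by (rule sum_mono, rule mono[OF yF zMF]) (auto simp: zM_def P_def)
    moreover have "(\<Sum>e\<in>M. g e zm) \<le> (\<Sum>e\<in>M. g e x)"
      by (rule sum_mono, rule mono[OF zmF xF]) (auto simp: zm_def M_def)
    moreover have "(\<Sum>e\<in>L - M. g e zm) \<le> (\<Sum>e\<in>L - M. g e y)"
      by (rule sum_mono, rule mono[OF zmF yF]) (auto simp: zm_def M_def)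
    ultimately show ?thesis
      using complement[OF yF PM(1)] complement[OF zMF PM(1)]
        complement[OF yF PM(2)] complement[OF zmF PM(2)] by linarith
  qed
  finally show ?thesis .
qed

text \<open>Splitting lm * p - a = (lm - lp) p + lp (p - q) - (a - b) gives the bound.\<close>
lemma sgn_drift_bound:
  fixes a b p q :: "'a \<Rightarrow> real"
  assumes finL: "finite L" and p_nonneg: "\<forall>e\<in>L. 0 \<le> p e" and p_sum: "(\<Sum>e\<in>L. p e) = 1"
    and lp_nonneg: "0 \<le> lp" and b_eq: "\<forall>e\<in>L. b e = lp * q e"
    and lattice: "(\<Sum>e\<in>L. sgn (a e - b e) * (p e - q e)) \<le> 0"
  shows "(\<Sum>e\<in>L. sgn (a e - b e) * (lm * p e - a e)) \<le> - (\<Sum>e\<in>L. \<bar>a e - b e\<bar>) + \<bar>lp - lm\<bar>"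
proof -
  have pointwise: "sgn (a e - b e) * (lm * p e - a e)
      = (lm - lp) * sgn (a e - b e) * p e + lp * (sgn (a e - b e) * (p e - q e)) - \<bar>a e - b e\<bar>"
    if "e \<in> L" for e
  proof -
    have "sgn (a e - b e) * (a e - b e) = \<bar>a e - b e\<bar>" by (simp add: abs_if sgn_real_def)
    then show ?thesis using b_eq that by (simp add: algebra_simps)
  qed
  have first: "(lm - lp) * sgn (a e - b e) * p e \<le> \<bar>lp - lm\<bar> * p e" if "e \<in> L" for e
  proof -
    have "(lm - lp) * sgn (a e - b e) \<le> \<bar>lp - lm\<bar>" by (auto simp: sgn_real_def abs_if)
    then show ?thesis using p_nonneg that by (simp add: mult_right_mono)
  qed
  have "(\<Sum>e\<in>L. sgn (a e - b e) * (lm * p e - a e))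
      = (\<Sum>e\<in>L. (lm - lp) * sgn (a e - b e) * p e)
        + lp * (\<Sum>e\<in>L. sgn (a e - b e) * (p e - q e)) - (\<Sum>e\<in>L. \<bar>a e - b e\<bar>)"
    by (simp add: pointwise sum.distrib sum_subtractf sum_distrib_left)
  also have "\<dots> \<le> \<bar>lp - lm\<bar> * (\<Sum>e\<in>L. p e) + 0 - (\<Sum>e\<in>L. \<bar>a e - b e\<bar>)"
  proof -
    have "(\<Sum>e\<in>L. (lm - lp) * sgn (a e - b e) * p e) \<le> (\<Sum>e\<in>L. \<bar>lp - lm\<bar> * p e)"
      using first by (rule sum_mono)
    moreover have "lp * (\<Sum>e\<in>L. sgn (a e - b e) * (p e - q e)) \<le> 0"
      using lp_nonneg lattice by (simp add: mult_nonneg_nonpos)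
    ultimately show ?thesis by (simp add: sum_distrib_left)
  qed
  finally show ?thesis using p_sum by simp
qed

section \<open>The network\<close>

lemma Pi_set_finite_paths:
  assumes "\<pi> \<in> Pi_set E n C"
  shows "finite (paths E n)"
proof -
  have "sum \<pi> (paths E n) = 1" using assms unfolding Pi_set_def by auto
  then show ?thesis by (metis sum.infinite zero_neq_one)
qed

lemma fpi_in_F_set:
  assumes "\<pi> \<in> Pi_set E n C"
  shows "fpi E n \<pi> \<in> F_set E C"
proof -
  have nonneg: "\<forall>p\<in>paths E n. 0 \<le> \<pi> p" and cap: "\<forall>e\<in>E. ereal (fpi E n \<pi> e) < C e"
    using assms unfolding Pi_set_def by auto
  have "0 \<le> fpi E n \<pi> e" for e unfolding fpi_def using nonneg by (auto intro: sum_nonneg)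
  then show ?thesis unfolding F_set_def using cap by simp
qed

lemma restr_in_flows_on:
  assumes "L \<subseteq> E" and "h \<in> F_set E C"
  shows "restr L h \<in> flows_on L C"
proof -
  have "\<forall>e\<in>L. 0 \<le> h e \<and> ereal (h e) < C e" using assms unfolding F_set_def by blast
  then show ?thesis unfolding restr_def flows_on_def by simp
qed

text \<open>Every path from 0 leaves the source exactly once, through its first link: since links
  increase the node index, no later link of the path starts at 0.\<close>
lemma path_source_links:
  assumes E_order: "\<forall>(a, b)\<in>E. a < b" and p: "p \<in> paths E n"
  shows "{e \<in> out_links E 0. e \<in> set p} = {hd p}"
proof -
  have ip: "p \<noteq> []" "set p \<subseteq> E" "fst (hd p) = 0"
    "\<forall>i. Suc i < length p \<longrightarrow> snd (p ! i) = fst (p ! Suc i)"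
    using p unfolding paths_def is_path_def by auto
  have later: "fst (p ! Suc k) > 0" if "Suc k < length p" for k
  proof -
    have "p ! k \<in> E" using ip(2) that by auto
    then have "fst (p ! k) < snd (p ! k)" using E_order by (cases "p ! k") auto
    then show ?thesis using ip(4) that by simp
  qed
  have "e = hd p" if "e \<in> set p" "fst e = 0" for e
  proof -
    obtain i where i: "i < length p" "e = p ! i" using \<open>e \<in> set p\<close> by (metis in_set_conv_nth)
    show ?thesis
      using later[of "i - 1"] i that(2) ip(1) by (cases i) (auto simp: hd_conv_nth)
  qed
  then show ?thesis using ip hd_in_set[OF ip(1)] unfolding out_links_def by auto
qed

lemma source_outflow:
  assumes finE: "finite E" and E_order: "\<forall>(a, b)\<in>E. a < b"
    and mass: "sum \<pi> (paths E n) = 1"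
  shows "(\<Sum>e\<in>out_links E 0. fpi E n \<pi> e) = 1"
proof -
  have finP: "finite (paths E n)" using mass by (metis sum.infinite zero_neq_one)
  have finO: "finite (out_links E 0)" using finE unfolding out_links_def by simp
  have "(\<Sum>e\<in>out_links E 0. fpi E n \<pi> e)
      = (\<Sum>e\<in>out_links E 0. \<Sum>p\<in>{p \<in> paths E n. e \<in> set p}. \<pi> p)" unfolding fpi_def ..
  also have "\<dots> = (\<Sum>p\<in>paths E n. \<Sum>e\<in>{e \<in> out_links E 0. e \<in> set p}. \<pi> p)"
    by (rule sum.swap_restrict[OF finO finP])
  also have "\<dots> = (\<Sum>p\<in>paths E n. \<pi> p)" using path_source_links[OF E_order] by simp
  finally show ?thesis using mass by simp
qed

lemma routing_cooperative_on:
  fixes h :: "link \<Rightarrow> (link \<Rightarrow> real) \<Rightarrow> ('b \<Rightarrow> real) \<Rightarrow> real"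
  assumes finL: "finite L" and finP: "finite P" and \<rho>B: "\<rho> \<in> B"
    and C1: "\<And>j. j \<in> L \<Longrightarrow> C1_on (Inl ` L \<union> Inr ` P)
        {z. (\<lambda>l. z (Inl l)) \<in> flows_on L C \<and> (\<lambda>p. z (Inr p)) \<in> B}
        (\<lambda>z. h j (\<lambda>l. z (Inl l)) (\<lambda>p. z (Inr p)))"
    and cross: "\<And>x j e D. x \<in> flows_on L C \<Longrightarrow> j \<in> L \<Longrightarrow> e \<in> L \<Longrightarrow> j \<noteq> e \<Longrightarrow>
        ((\<lambda>t. h j (x(e := t)) \<rho>) has_real_derivative D) (at (x e) within cap_interval (C e))
        \<Longrightarrow> 0 \<le> D"
  shows "cooperative_on L C (\<lambda>j x. h j x \<rho>)"
  unfolding cooperative_on_def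
proof (intro ballI conjI impI allI)
  fix x e j assume xF: "x \<in> flows_on L C" and eL: "e \<in> L" and jL: "j \<in> L"
  have "\<forall>s\<in>cap_interval (C e). x(e:=s) \<in> flows_on L C"
    using xF eL unfolding flows_on_def by auto
  moreover have "x e \<in> cap_interval (C e)" using xF eL unfolding flows_on_def by auto
  ultimately show "\<exists>d. ((\<lambda>t. h j (x(e:=t)) \<rho>) has_real_derivative d)
      (at (x e) within cap_interval (C e))"
    using C1_on_link_partial_derivative[OF C1[OF jL] finL finP eL _ \<rho>B] by blast
  fix D assume "j \<noteq> e"
    and "((\<lambda>t. h j (x(e:=t)) \<rho>) has_real_derivative D) (at (x e) within cap_interval (C e))"
  then show "0 \<le> D" using cross xF jL eL by blast
qed

text \<open>At node v: the routing map is cooperative, so the lattice inequality holds for the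
  actual and equilibrium flows; consistency writes the equilibrium flow as lp times the
  routing at equilibrium; H is lm times the routing minus the flow; and at the source both
  the equilibrium outflow lp and the nominal inflow lm equal 1.  The pointwise drift
  estimate then gives the claim.\<close>
theorem lemma2:
  fixes E :: "link set" and n :: nat and C :: "link \<Rightarrow> ereal"
    and G :: "nat \<Rightarrow> (link \<Rightarrow> real) \<Rightarrow> (path \<Rightarrow> real) \<Rightarrow> link \<Rightarrow> real"
    and v :: nat and \<pi> :: "path \<Rightarrow> real" and f :: "link \<Rightarrow> real"
  assumes finE: "finite E"
    and E_nodes: "E \<subseteq> {0..n} \<times> {0..n}"
    and E_order: "\<forall>(a, b)\<in>E. a < b"
    and source: "\<forall>w\<in>{0..n}. in_links E w = {} \<longleftrightarrow> w = 0"
    and sink: "\<forall>w\<in>{0..n}. out_links E w = {} \<longleftrightarrow> w = n"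
    and reach: "\<forall>w\<in>{0..n}. (w, n) \<in> E\<^sup>*"
    and cap_pos: "\<forall>e\<in>E. 0 < C e"
    and G_simplex: "\<forall>w<n. \<forall>x\<in>flows_on (out_links E w) C. \<forall>\<rho>\<in>Pi_set E n C.
         (\<forall>e\<in>out_links E w. 0 \<le> G w x \<rho> e) \<and> (\<Sum>e\<in>out_links E w. G w x \<rho> e) = 1"
    and G_C1: "\<forall>w<n. \<forall>e\<in>out_links E w.
         C1_on (Inl ` out_links E w \<union> Inr ` paths E n)
           {z. (\<lambda>l. z (Inl l)) \<in> flows_on (out_links E w) C \<and> (\<lambda>p. z (Inr p)) \<in> Pi_set E n C}
           (\<lambda>z. G w (\<lambda>l. z (Inl l)) (\<lambda>p. z (Inr p)) e)"
    and G_consistent: "\<forall>w<n. \<forall>\<rho>\<in>Pi_set E n C. \<forall>e\<in>out_links E w.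
         (\<Sum>j\<in>out_links E w. fpi E n \<rho> j) * G w (restr (out_links E w) (fpi E n \<rho>)) \<rho> e
           = fpi E n \<rho> e"
    and G_cooperative: "\<forall>w<n. \<forall>\<rho>\<in>Pi_set E n C. \<forall>x\<in>flows_on (out_links E w) C.
         \<forall>j\<in>out_links E w. \<forall>e\<in>out_links E w. j \<noteq> e \<longrightarrow>
         (\<forall>D. ((\<lambda>t. G w (x(e := t)) \<rho> j) has_real_derivative D)
                 (at (x e) within {t. 0 \<le> t \<and> ereal t < C e}) \<longrightarrow> 0 \<le> D)"
    and v_range: "v < n"
    and pi_in: "\<pi> \<in> Pi_set E n C"
    and f_in: "f \<in> F_set E C"
  shows "(\<Sum>e\<in>out_links E v. sgn (f e - fpi E n \<pi> e) * H E G f \<pi> e)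
           \<le> - Vplus E n v f \<pi> + Vminus E n v f \<pi>"
proof -
  define L where "L = out_links E v"
  define g where "g = (\<lambda>j x. G v x \<pi> j)"
  define x where "x = restr L f"
  define y where "y = restr L (fpi E n \<pi>)"
  define lp where "lp = (\<Sum>e\<in>L. fpi E n \<pi> e)"
  define lm where "lm = (if v = 0 then 1 else \<Sum>j\<in>in_links E v. f j)"
  have finL: "finite L" and LE: "L \<subseteq> E" using finE unfolding L_def out_links_def by auto
  have mass: "sum \<pi> (paths E n) = 1" using pi_in unfolding Pi_set_def by auto
  have fpi_F: "fpi E n \<pi> \<in> F_set E C" by (rule fpi_in_F_set[OF pi_in])
  have xF: "x \<in> flows_on L C" and yF: "y \<in> flows_on L C"
    unfolding x_def y_def using restr_in_flows_on[OF LE] f_in fpi_F by auto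
  have simplex: "\<forall>z\<in>flows_on L C. (\<Sum>e\<in>L. g e z) = 1" and p_nonneg: "\<forall>e\<in>L. 0 \<le> g e x"
    using G_simplex v_range pi_in xF unfolding L_def g_def by blast+
  have coop: "cooperative_on L C g"
    unfolding g_def L_def
    by (rule routing_cooperative_on[where h = "\<lambda>j x \<rho>. G v x \<rho> j",
          OF finL[unfolded L_def] Pi_set_finite_paths[OF pi_in] pi_in G_C1[rule_format, OF v_range]
          G_cooperative[rule_format, OF v_range pi_in]])
  have lattice: "(\<Sum>e\<in>L. sgn (f e - fpi E n \<pi> e) * (g e x - g e y)) \<le> 0"
    using cooperative_sgn_sum_nonpos[OF coop finL simplex xF yF] by (simp add: x_def y_def restr_def)
  have consistent: "\<forall>e\<in>L. fpi E n \<pi> e = lp * g e y"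
    using G_consistent v_range pi_in unfolding lp_def g_def y_def L_def by auto
  have H_eq: "H E G f \<pi> e = lm * g e x - f e" if "e \<in> L" for e
    using that unfolding H_def lm_def g_def x_def L_def out_links_def by (auto simp: Let_def)
  have "Vminus E n v f \<pi> = \<bar>lp - lm\<bar>"
    using source_outflow[OF finE E_order mass] unfolding Vminus_def lm_def lp_def L_def by auto
  moreover have "0 \<le> lp" unfolding lp_def using fpi_F LE by (auto simp: F_set_def intro: sum_nonneg)
  ultimately show ?thesis
    using sgn_drift_bound[OF finL p_nonneg simplex[rule_format, OF xF] _ consistent lattice, of lm]
    unfolding Vplus_def L_def[symmetric] lp_def[symmetric] by (simp add: H_eq)
qed

end
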